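(* In the setting of the context, the contamination of $\widehat{\boldsymbol\alpha}_{2,\mathsf{real}}$ satisfies $$\mathsf{CN}_r(t)=\sqrt{\mathbf z_t^\top\mathbf C\,\mathbf z_t}=|1-\mathsf{SU}_r(t)|\sqrt{\mathbf z_t^\top\widetilde{\mathbf C}\,\mathbf z_t},$$ where $\mathbf C=\mathbf A^{-1}\big(\sum_{j\ne t}\lambda_j^2\mathbf z_j\mathbf z_j^\top\big)\mathbf A^{-1}$ and $\widetilde{\mathbf C}=\mathbf A_{-t}^{-1}\big(\sum_{j\ne t}\lambda_j^2\mathbf z_j\mathbf z_j^\top\big)\mathbf A_{-t}^{-1}$.
   Context: Setting: $d\ge n$, $\lambda_1,\dots,\lambda_d>0$; $\mathbf z_1,\dots,\mathbf z_d$ i.i.d. $\mathcal N(\mathbf0,\mathbf I_n)$; $\boldsymbol\Phi_{\mathsf{train}}=[\sqrt{\lambda_1}\mathbf z_1,\dots,\sqrt{\lambda_d}\mathbf z_d]$ (rows i.i.d. $\mathcal N(\mathbf0,\mathrm{diag}(\lambda))$); $\mathbf A=\sum_j\lambda_j\mathbf z_j\mathbf z_j^\top$, $\mathbf A_{-t}=\sum_{j\ne t}\lambda_j\mathbf z_j\mathbf z_j^\top$. Target $\boldsymbol\alpha^*=\mathbf e_t/\sqrt{\lambda_t}$, so the real outputs are $\mathbf Z_{\mathsf{train}}=\mathbf z_t$. $\widehat{\boldsymbol\alpha}_{2,\mathsf{real}}$ is the minimum-$\ell_2$-norm solution of $\boldsymbol\Phi_{\mathsf{train}}\boldsymbol\alpha=\mathbf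 z_t$; $\mathsf{SU}_r(t)=\sqrt{\lambda_t}(\widehat{\boldsymbol\alpha}_{2,\mathsf{real}})_t$, $\mathsf{CN}_r(t)=\sqrt{\sum_{j\ne t}\lambda_j(\widehat{\boldsymbol\alpha}_{2,\mathsf{real}})_j^2}$. *)

theory Defs
  imports "HOL-Analysis.Analysis"
begin

text \<open>Vectors in R^n are real^'n, R^d are real^'d; n = CARD('n), d = CARD('d).\<close>

definition outer :: "real^'n \<Rightarrow> real^'n \<Rightarrow> real^'n^'n" where
  "outer u v = (\<chi> i k. u $ i * v $ k)"

definition Phi :: "('d \<Rightarrow> real) \<Rightarrow> ('d \<Rightarrow> real^'n) \<Rightarrow> real^'d^'n" where
  "Phi lam z = (\<chi> i j. sqrt (lam j) * z j $ i)"

definition gram :: "nat \<Rightarrow> ('d \<Rightarrow> real) \<Rightarrow> ('d \<Rightarrow> real^'n) \<Rightarrow> 'd set \<Rightarrow> real^'n^'n" where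
  "gram p lam z S = (\<Sum>j\<in>S. (lam j ^ p) *\<^sub>R outer (z j) (z j))"

definition min_norm_sol :: "real^'d^'n \<Rightarrow> real^'n \<Rightarrow> real^'d \<Rightarrow> bool" where
  "min_norm_sol M y a \<longleftrightarrow> M *v a = y \<and> (\<forall>b. M *v b = y \<longrightarrow> norm a \<le> norm b)"

definition SU_r :: "('d \<Rightarrow> real) \<Rightarrow> real^'d \<Rightarrow> 'd \<Rightarrow> real" where
  "SU_r lam a t = sqrt (lam t) * a $ t"

definition CN_r :: "('d \<Rightarrow> real) \<Rightarrow> real^'d \<Rightarrow> 'd \<Rightarrow> real" where
  "CN_r lam a t = sqrt (\<Sum>j\<in>UNIV - {t}. lam j * (a $ j)^2)"

end

theory Submission
  imports Defs
begin

text \<open>The minimum-norm solution of Phi alpha = z_t lies in the row space of Phi, and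
  Phi Phi^T = A, so alpha = Phi^T w with w = A^-1 z_t, i.e. alpha_j = sqrt lambda_j (z_j . w).
  Hence SU = lambda_t (z_t . w) and CN^2 = sum_{j ~= t} lambda_j^2 (z_j . w)^2, the first identity.
  Splitting off the rank-one term lambda_t z_t z_t^T of A in A w = z_t gives
  A_{-t} w = (1 - SU) z_t, so w = (1 - SU) A_{-t}^-1 z_t, which is the second identity.\<close>

lemma outer_mult_vector: "outer u v *v x = (v \<bullet> x) *\<^sub>R u"
  by (simp add: outer_def vec_eq_iff matrix_vector_mult_def inner_vec_def sum_distrib_left mult_ac)

lemma sum_matrix_vector_mult: "(\<Sum>j\<in>S. f j) *v x = (\<Sum>j\<in>S. f j *v x)"
  for f :: "'j \<Rightarrow> real^'n^'m"
  by (induction S rule: infinite_finite_induct) (simp_all add: matrix_vector_mult_add_rdistrib)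

lemma gram_mult_vector: "gram p lam z S *v x = (\<Sum>j\<in>S. (lam j ^ p * (z j \<bullet> x)) *\<^sub>R z j)"
  by (simp add: gram_def sum_matrix_vector_mult outer_mult_vector scaleR_matrix_vector_assoc[symmetric])

lemma inner_gram_mult_vector: "x \<bullet> (gram p lam z S *v x) = (\<Sum>j\<in>S. lam j ^ p * (z j \<bullet> x)\<^sup>2)"
  by (simp add: gram_mult_vector inner_sum_right inner_commute power2_eq_square mult_ac)

lemma gram_remove:
  assumes "t \<in> S" "finite S"
  shows "gram p lam z S = lam t ^ p *\<^sub>R outer (z t) (z t) + gram p lam z (S - {t})"
  using assms by (simp add: gram_def sum.remove)

lemma transpose_gram: "transpose (gram p lam z S) = gram p lam z S"
  by (simp add: gram_def outer_def vec_eq_iff transpose_def mult_ac)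

lemma transpose_Phi_mult_vector: "transpose (Phi lam z) *v w = (\<chi> j. sqrt (lam j) * (z j \<bullet> w))"
  by (simp add: Phi_def vec_eq_iff matrix_vector_mult_def transpose_def inner_vec_def
      sum_distrib_left mult_ac)

lemma Phi_mult_transpose_Phi:
  assumes "\<forall>j. 0 \<le> lam j"
  shows "Phi lam z ** transpose (Phi lam z) = gram 1 lam z UNIV"
proof -
  have sqrt_sq: "sqrt (lam j) * a * (sqrt (lam j) * b) = lam j * (a * b)" for j a b
  proof -
    have "sqrt (lam j) * a * (sqrt (lam j) * b) = (sqrt (lam j) * sqrt (lam j)) * (a * b)"
      by (simp only: mult_ac)
    then show ?thesis
      using assms by simp
  qed
  show ?thesis
    unfolding Phi_def gram_def outer_def
    by (simp add: vec_eq_iff matrix_matrix_mult_def transpose_def) (simp add: sqrt_sq)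
qed

lemma min_norm_sol_transpose:
  fixes M :: "real^'d^'n"
  assumes "min_norm_sol M y a" "M *v (transpose M *v w) = y"
  shows "a = transpose M *v w"
proof -
  define a0 where "a0 = transpose M *v w"
  have "a0 \<bullet> (a - a0) = w \<bullet> (M *v (a - a0))"
    by (simp add: a0_def dot_lmul_matrix)
  also have "\<dots> = 0"
    using assms by (simp add: a0_def min_norm_sol_def matrix_vector_mult_diff_distrib)
  finally have "(norm a)\<^sup>2 = (norm a0)\<^sup>2 + (norm (a - a0))\<^sup>2"
    using dot_norm[of a0 "a - a0"] by simp
  moreover have "norm a \<le> norm a0"
    using assms unfolding min_norm_sol_def a0_def by blast
  ultimately have "(norm (a - a0))\<^sup>2 \<le> 0"
    using power_mono[OF \<open>norm a \<le> norm a0\<close>, of 2] by simp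
  then show ?thesis
    by (simp add: a0_def)
qed

lemma matrix_inv_right: "invertible M \<Longrightarrow> M ** matrix_inv M = mat 1"
  and matrix_inv_left: "invertible M \<Longrightarrow> matrix_inv M ** M = mat 1"
  unfolding invertible_def matrix_inv_def by (metis (mono_tags, lifting) someI_ex)+

lemma transpose_matrix_inv_symmetric:
  fixes M :: "real^'n^'n"
  assumes "invertible M" "transpose M = M"
  shows "transpose (matrix_inv M) = matrix_inv M"
proof -
  have "M ** transpose (matrix_inv M) = mat 1"
    using arg_cong[OF matrix_inv_left[OF assms(1)], of transpose] assms(2)
    by (simp add: matrix_transpose_mul transpose_mat)
  then have "matrix_inv M = (matrix_inv M ** M) ** transpose (matrix_inv M)"
    by (metis matrix_mul_assoc matrix_mul_rid)
  then show ?thesis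
    by (simp add: matrix_inv_left[OF assms(1)])
qed

lemma inner_symmetric_sandwich:
  fixes X G :: "real^'n^'n"
  assumes "transpose X = X"
  shows "y \<bullet> ((X ** G ** X) *v y) = (X *v y) \<bullet> (G *v (X *v y))"
  by (metis assms dot_lmul_matrix matrix_vector_mul_assoc transpose_matrix_vector)

lemma SU_r_transpose_Phi:
  "0 \<le> lam t \<Longrightarrow> SU_r lam (transpose (Phi lam z) *v w) t = lam t * (z t \<bullet> w)"
  unfolding SU_r_def transpose_Phi_mult_vector by (simp add: mult.assoc[symmetric])

lemma CN_r_transpose_Phi:
  assumes "\<forall>j. 0 \<le> lam j"
  shows "CN_r lam (transpose (Phi lam z) *v w) t = sqrt (w \<bullet> (gram 2 lam z (UNIV - {t}) *v w))"
  using assms unfolding CN_r_def transpose_Phi_mult_vector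
  by (simp add: inner_gram_mult_vector power_mult_distrib power2_eq_square[of "lam _"] mult.assoc)

theorem lemma10:
  fixes lam :: "'d::finite \<Rightarrow> real" and z :: "'d \<Rightarrow> real^'n::finite"
    and t :: 'd and a :: "real^'d"
  assumes "CARD('n) \<le> CARD('d)"
    and "\<forall>j. lam j > 0"
    and "invertible (gram 1 lam z UNIV)"
    and "invertible (gram 1 lam z (UNIV - {t}))"
    and "min_norm_sol (Phi lam z) (z t) a"
  shows "CN_r lam a t =
           sqrt (z t \<bullet> ((matrix_inv (gram 1 lam z UNIV) ** gram 2 lam z (UNIV - {t})
                           ** matrix_inv (gram 1 lam z UNIV)) *v z t))
       \<and> CN_r lam a t =
           \<bar>1 - SU_r lam a t\<bar> *
           sqrt (z t \<bullet> ((matrix_inv (gram 1 lam z (UNIV - {t})) ** gram 2 lam z (UNIV - {t})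
                           ** matrix_inv (gram 1 lam z (UNIV - {t}))) *v z t))"
proof -
  define A B G where "A = gram 1 lam z UNIV" and "B = gram 1 lam z (UNIV - {t})"
    and "G = gram 2 lam z (UNIV - {t})"
  define w u where "w = matrix_inv A *v z t" and "u = matrix_inv B *v z t"
  define SU where "SU = SU_r lam a t"
  have lam_nonneg: "\<forall>j. 0 \<le> lam j"
    using assms(2) by (simp add: less_imp_le)
  have Aw: "A *v w = z t"
    using matrix_inv_right[OF assms(3)] by (simp add: A_def w_def matrix_vector_mul_assoc)
  have "Phi lam z *v (transpose (Phi lam z) *v w) = z t"
    unfolding matrix_vector_mul_assoc Phi_mult_transpose_Phi[OF lam_nonneg] using Aw A_def by simp
  then have a: "a = transpose (Phi lam z) *v w"
    using assms(5) min_norm_sol_transpose by blast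
  have CN: "CN_r lam a t = sqrt (w \<bullet> (G *v w))"
    unfolding a G_def by (rule CN_r_transpose_Phi[OF lam_nonneg])
  have SU: "SU = lam t * (z t \<bullet> w)"
    unfolding SU_def a using SU_r_transpose_Phi lam_nonneg by blast
  have "A *v w = (lam t * (z t \<bullet> w)) *\<^sub>R z t + B *v w"
    by (simp add: A_def B_def gram_remove matrix_vector_mult_add_rdistrib outer_mult_vector
        scaleR_matrix_vector_assoc[symmetric])
  then have "B *v w = (1 - SU) *\<^sub>R z t"
    using Aw by (simp add: SU algebra_simps)
  then have "w = (1 - SU) *\<^sub>R u"
    using matrix_inv_left[OF assms(4)]
    by (metis B_def u_def matrix_vector_mul_assoc matrix_vector_mul_lid matrix_vector_mult_scaleR)
  then have "CN_r lam a t = \<bar>1 - SU\<bar> * sqrt (u \<bullet> (G *v u))"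
    by (simp add: CN matrix_vector_mult_scaleR real_sqrt_mult mult.assoc[symmetric] real_sqrt_abs2)
  then show ?thesis
    using CN assms(3,4)
    by (simp add: A_def B_def G_def SU_def w_def u_def inner_symmetric_sandwich
        transpose_matrix_inv_symmetric transpose_gram)
qed

end
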